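(* Consider the slotted transmission system with persistently backlogged transmitter and transmission policy $P$ described in the context, with loss probability $p\in[0,1)$, feedback delay $d\ge0$ and threshold $\gamma>0$. Suppose the loss process $\{X_k\}$ is ergodic. Then, with $\bar{S}_k:=\frac1k\sum_{i=1}^kS_i$, $$\lim_{k\to\infty}\big|E[\bar{S}_k]-(1-p)\big|\le\frac{1+2d}{\gamma},$$ and $E\big(\frac1k\sum_{i=1}^kQ^r_i\big)<\infty$ for all $k$.
   Context: Time is slotted, slots $k=1,2,\dots$; in each slot exactly one packet is transmitted over a lossy path: the transmitter queue of information packets is assumed to be persistently backlogged, and in slot $k$ either an information packet ($S_k=1$) or a coded packet ($C_k=1$) is sent, with $S_k=1-C_k$, $S_k,C_k\in\{0,1\}$. Erasures: $X_k=1$ if the packet sent in slot $k$ is erased and $0$ otherwise, $X_k\in\{0,1\}$ with $E[X_k]=p$. The virtual receiver queue evolves as $Q^r_{k+1}=[Q^r_k+S_kX_k-C_k(1-X_k)]^+$, where $[x]^+=\max\{x,0\}$. Feedback reaches the transmitter with delay $d$ slots; the transmitter uses the estimate $\hat{Q}^r_k=Q^r_{k-d}+\sum_{j=k-d}^{k-1}(S_jp-C_j(1-p))$ (quantities with non-positive indices are given initial values). Transmission policy $P$ with parameter $\gamma$: $C_k\in\arg\min_{C\in\{0,1\}}(-\hat{Q}^r_k+\gamma)C$, $S_k=1-C_k$. *)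

theory Defs
  imports "HOL-Probability.Probability"
begin

definition seq_space :: "(nat \<Rightarrow> real) measure" where
  "seq_space = Pi\<^sub>M UNIV (\<lambda>_. borel)"

definition shift_seq :: "(nat \<Rightarrow> 'b) \<Rightarrow> (nat \<Rightarrow> 'b)" where
  "shift_seq f = (\<lambda>n. f (Suc n))"

definition stationary_ergodic :: "'a measure \<Rightarrow> (nat \<Rightarrow> 'a \<Rightarrow> real) \<Rightarrow> bool" where
  "stationary_ergodic M X \<longleftrightarrow>
     (let \<mu> = distr M seq_space (\<lambda>\<omega> n. X (Suc n) \<omega>) in
        distr \<mu> seq_space shift_seq = \<mu> \<and>
        (\<forall>A \<in> sets seq_space. shift_seq -` A \<inter> space seq_space = A \<longrightarrow>
             emeasure \<mu> A = 0 \<or> emeasure \<mu> A = 1))"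

text \<open>Transmitter's estimate of the receiver queue in slot k (integer indices):
  hat Q_k = Q_{k-d} + sum_{j=k-d}^{k-1} (S_j p - C_j (1-p)), with S_j = 1 - C_j.\<close>

definition Qhat_of :: "real \<Rightarrow> nat \<Rightarrow> (int \<Rightarrow> real) \<Rightarrow> (int \<Rightarrow> real) \<Rightarrow> int \<Rightarrow> real" where
  "Qhat_of p d Q C k = Q (k - int d) + (\<Sum>j\<in>{k - int d..k - 1}. (1 - C j) * p - C j * (1 - p))"

text \<open>Policy P: C_k in argmin over C in {0,1} of (gamma - hat Q_k) C; in case of a tie
  (hat Q_k = gamma) both choices are minimisers, resolved by the tie-break bit.\<close>

definition policy_C :: "real \<Rightarrow> real \<Rightarrow> bool \<Rightarrow> real" where
  "policy_C \<gamma> qh t = (if qh > \<gamma> then 1 else if qh < \<gamma> then 0 else (if t then 1 else 0))"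

text \<open>State after processing slots 1..n: Q values (valid up to index n+1)
  and C values (valid up to index n). Initially Q_k = q0 k for k \<le> 1 and C_k = c0 k for k \<le> 0.
  x is the realised loss sequence (x k = X_k).\<close>

fun traj :: "real \<Rightarrow> nat \<Rightarrow> real \<Rightarrow> (int \<Rightarrow> real) \<Rightarrow> (int \<Rightarrow> real) \<Rightarrow> (nat \<Rightarrow> bool)
             \<Rightarrow> (nat \<Rightarrow> real) \<Rightarrow> nat \<Rightarrow> (int \<Rightarrow> real) \<times> (int \<Rightarrow> real)" where
  "traj p d \<gamma> q0 c0 tb x 0 = (q0, c0)"
| "traj p d \<gamma> q0 c0 tb x (Suc n) =
     (let QC = traj p d \<gamma> q0 c0 tb x n; Q = fst QC; C = snd QC; k = int (Suc n);
          c = policy_C \<gamma> (Qhat_of p d Q C k) (tb (Suc n));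
          q' = max 0 (Q k + (1 - c) * x (Suc n) - c * (1 - x (Suc n)))
      in (Q(k + 1 := q'), C(k := c)))"

definition Cproc :: "real \<Rightarrow> nat \<Rightarrow> real \<Rightarrow> (int \<Rightarrow> real) \<Rightarrow> (int \<Rightarrow> real) \<Rightarrow> (nat \<Rightarrow> bool)
             \<Rightarrow> (nat \<Rightarrow> real) \<Rightarrow> nat \<Rightarrow> real" where
  "Cproc p d \<gamma> q0 c0 tb x k = snd (traj p d \<gamma> q0 c0 tb x k) (int k)"

definition Sproc :: "real \<Rightarrow> nat \<Rightarrow> real \<Rightarrow> (int \<Rightarrow> real) \<Rightarrow> (int \<Rightarrow> real) \<Rightarrow> (nat \<Rightarrow> bool)
             \<Rightarrow> (nat \<Rightarrow> real) \<Rightarrow> nat \<Rightarrow> real" where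
  "Sproc p d \<gamma> q0 c0 tb x k = 1 - Cproc p d \<gamma> q0 c0 tb x k"

definition Qrproc :: "real \<Rightarrow> nat \<Rightarrow> real \<Rightarrow> (int \<Rightarrow> real) \<Rightarrow> (int \<Rightarrow> real) \<Rightarrow> (nat \<Rightarrow> bool)
             \<Rightarrow> (nat \<Rightarrow> real) \<Rightarrow> nat \<Rightarrow> real" where
  "Qrproc p d \<gamma> q0 c0 tb x k = fst (traj p d \<gamma> q0 c0 tb x (k - 1)) (int k)"

end

theory Submission
  imports Defs
begin

text \<open>
  The receiver queue moves by \<open>X\<^sub>k - C\<^sub>k\<close> unless it is clipped at 0, and the transmitter's
  estimate is off by at most \<open>d\<close>, since in each of the last \<open>d\<close> slots the queue moves at most 1
  away from its expected drift. Hence information packets are only sent while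
  \<open>Q\<^sup>r\<^sub>k \<le> \<gamma> + d\<close> and coded packets only while \<open>Q\<^sup>r\<^sub>k \<ge> \<gamma> - d\<close>, so the queue stays bounded.
  If \<open>\<gamma> \<ge> d + 1\<close>, coded packets are never sent to an empty queue after slot \<open>d\<close>, and
  telescoping shows that \<open>\<Sum> S\<^sub>i\<close> differs from the number \<open>\<Sum> (1 - X\<^sub>i)\<close> of unerased slots by a
  bounded amount; taking expectations, the expected average of the \<open>S\<^sub>i\<close> tends to \<open>1 - p\<close>. If \<open>\<gamma> < d + 1\<close>, the claimed bound
  is at least 1 and holds trivially.
\<close>

definition expected_drift :: "real \<Rightarrow> real \<Rightarrow> real" where
  "expected_drift p c = (1 - c) * p - c * (1 - p)"

text \<open>
  A sample path of the system: \<open>x\<close> are the erasures, \<open>C\<close> the coded-packet indicators and \<open>Q\<close> the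
  receiver queue, whose increment \<open>S\<^sub>i x\<^sub>i - C\<^sub>i (1 - x\<^sub>i)\<close> equals \<open>x\<^sub>i - C\<^sub>i\<close>. Policy P is only
  constrained after slot \<open>d\<close>, where the estimate no longer involves initial values.
\<close>

locale threshold_queue =
  fixes p \<gamma> :: real and d :: nat and x C Q :: "nat \<Rightarrow> real"
  assumes p_nonneg: "0 \<le> p" and p_le_1: "p \<le> 1"
    and x_01: "i \<ge> 1 \<Longrightarrow> x i \<in> {0, 1}"
    and C_01: "i \<ge> 1 \<Longrightarrow> C i \<in> {0, 1}"
    and Q_1_nonneg: "Q 1 \<ge> 0"
    and Q_Suc: "i \<ge> 1 \<Longrightarrow> Q (Suc i) = max 0 (Q i + x i - C i)"
    and estimate_ge_if_C1:
      "d < i \<Longrightarrow> C i = 1 \<Longrightarrow> \<gamma> \<le> Q (i - d) + (\<Sum>j\<in>{i - d..<i}. expected_drift p (C j))"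
    and estimate_le_if_C0:
      "d < i \<Longrightarrow> C i = 0 \<Longrightarrow> Q (i - d) + (\<Sum>j\<in>{i - d..<i}. expected_drift p (C j)) \<le> \<gamma>"
begin

lemma Q_nonneg: "i \<ge> 1 \<Longrightarrow> Q i \<ge> 0"
proof (induction i rule: dec_induct)
  case (step i)
  show ?case using Q_Suc[OF step(1)] by simp
qed (rule Q_1_nonneg)

lemma Q_Suc_le: "i \<ge> 1 \<Longrightarrow> Q (Suc i) \<le> Q i + 1"
  using Q_Suc x_01 C_01 Q_nonneg by fastforce

lemma Q_Suc_le_if_C1: "i \<ge> 1 \<Longrightarrow> C i = 1 \<Longrightarrow> Q (Suc i) \<le> Q i"
  using Q_Suc x_01 Q_nonneg by fastforce

lemma Q_Suc_drift: "i \<ge> 1 \<Longrightarrow> \<bar>Q (Suc i) - Q i - expected_drift p (C i)\<bar> \<le> 1"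
  using Q_Suc[of i] x_01[of i] C_01[of i] Q_nonneg[of i] p_nonneg p_le_1
  by (auto simp: expected_drift_def)

lemma estimate_error:
  assumes "d < i"
  shows "\<bar>Q i - (Q (i - d) + (\<Sum>j\<in>{i - d..<i}. expected_drift p (C j)))\<bar> \<le> d"
proof -
  have "Q i - Q (i - d) = (\<Sum>j\<in>{i - d..<i}. Q (Suc j) - Q j)"
    by (rule sum_Suc_diff'[symmetric]) simp
  then have "Q i - (Q (i - d) + (\<Sum>j\<in>{i - d..<i}. expected_drift p (C j)))
      = (\<Sum>j\<in>{i - d..<i}. Q (Suc j) - Q j - expected_drift p (C j))"
    by (simp add: sum_subtractf)
  also have "\<bar>\<dots>\<bar> \<le> (\<Sum>j\<in>{i - d..<i}. 1)"
    by (rule order_trans[OF sum_abs sum_mono]) (use assms Q_Suc_drift in auto)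
  finally show ?thesis using assms by simp
qed

lemma Q_le_if_C0: "d < i \<Longrightarrow> C i = 0 \<Longrightarrow> Q i \<le> \<gamma> + d"
  using estimate_error estimate_le_if_C0 by fastforce

lemma Q_ge_if_C1: "d < i \<Longrightarrow> C i = 1 \<Longrightarrow> \<gamma> - d \<le> Q i"
  using estimate_error estimate_ge_if_C1 by fastforce

lemma Q_le_linear: "i \<ge> 1 \<Longrightarrow> Q i \<le> Q 1 + real (i - 1)"
proof (induction i rule: dec_induct)
  case (step i)
  then show ?case using Q_Suc_le[OF step(1)] by simp
qed simp

lemma Q_bounded: "i \<ge> 1 \<Longrightarrow> Q i \<le> max (Q 1 + d) (\<gamma> + d + 1)"
proof (induction i rule: dec_induct)
  case base
  then show ?case by simp
next
  case (step i)
  show ?case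
  proof (cases "d < i")
    case True
    then show ?thesis
      using C_01[OF step(1)] Q_le_if_C0 Q_Suc_le[OF step(1)] Q_Suc_le_if_C1[OF step(1)] step(3)
      by fastforce
  next
    case False
    then show ?thesis using Q_le_linear[of "Suc i"] by simp
  qed
qed

lemma clipping_bounds: "i \<ge> 1 \<Longrightarrow> 0 \<le> Q (Suc i) - (Q i + x i - C i) \<and> Q (Suc i) - (Q i + x i - C i) \<le> 1"
  using Q_Suc[of i] x_01[of i] C_01[of i] Q_nonneg[of i] by auto

text \<open>For \<open>\<gamma> \<ge> d + 1\<close>, \<open>Q_ge_if_C1\<close> gives \<open>Q i \<ge> 1\<close> whenever a coded packet is sent.\<close>

lemma no_clipping: "\<gamma> \<ge> real d + 1 \<Longrightarrow> d < i \<Longrightarrow> Q (Suc i) = Q i + x i - C i"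
  using Q_Suc[of i] x_01[of i] C_01[of i] Q_ge_if_C1[of i] Q_nonneg[of i] by fastforce

lemma total_clipping_bounds:
  assumes "\<gamma> \<ge> real d + 1"
  shows "0 \<le> (\<Sum>i=1..k. Q (Suc i) - (Q i + x i - C i)) \<and> (\<Sum>i=1..k. Q (Suc i) - (Q i + x i - C i)) \<le> min k d"
proof (induction k)
  case (Suc k)
  then show ?case
    using clipping_bounds[of "Suc k"] no_clipping[OF assms, of "Suc k"] by (cases "d < Suc k") auto
qed simp

lemma throughput_deviation_bounded:
  assumes "\<gamma> \<ge> real d + 1"
  shows "\<bar>(\<Sum>i=1..k. 1 - C i) - (\<Sum>i=1..k. 1 - x i)\<bar> \<le> max (Q 1 + d) (\<gamma> + d + 1) + Q 1 + d"
proof -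
  have "(\<Sum>i=1..k. 1 - C i) - (\<Sum>i=1..k. 1 - x i) = (\<Sum>i=1..k. Q (Suc i) - Q i)
      - (\<Sum>i=1..k. Q (Suc i) - (Q i + x i - C i))"
    by (simp add: sum_subtractf[symmetric] algebra_simps)
  also have "(\<Sum>i=1..k. Q (Suc i) - Q i) = Q (Suc k) - Q 1"
    by (rule sum_Suc_diff) simp
  finally show ?thesis
    using total_clipping_bounds[OF assms, of k] Q_bounded[of "Suc k"] Q_nonneg[of "Suc k"] Q_1_nonneg
    by linarith
qed

end

lemma traj_Suc_fst:
  "fst (traj p d \<gamma> q0 c0 tb x (Suc n)) j =
    (if j = int (Suc n) + 1 then
       max 0 (fst (traj p d \<gamma> q0 c0 tb x n) (int (Suc n))
         + (1 - snd (traj p d \<gamma> q0 c0 tb x (Suc n)) (int (Suc n))) * x (Suc n)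
         - snd (traj p d \<gamma> q0 c0 tb x (Suc n)) (int (Suc n)) * (1 - x (Suc n)))
     else fst (traj p d \<gamma> q0 c0 tb x n) j)"
  by (simp add: Let_def)

lemma traj_Suc_snd:
  "snd (traj p d \<gamma> q0 c0 tb x (Suc n)) j =
    (if j = int (Suc n) then
       policy_C \<gamma> (Qhat_of p d (fst (traj p d \<gamma> q0 c0 tb x n)) (snd (traj p d \<gamma> q0 c0 tb x n))
         (int (Suc n))) (tb (Suc n))
     else snd (traj p d \<gamma> q0 c0 tb x n) j)"
  by (simp add: Let_def)

declare traj.simps(2) [simp del]

lemma fst_traj_stable:
  "n \<le> m \<Longrightarrow> j \<le> int n + 1 \<Longrightarrow>
     fst (traj p d \<gamma> q0 c0 tb x m) j = fst (traj p d \<gamma> q0 c0 tb x n) j"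
  by (induction m rule: dec_induct) (auto simp: traj_Suc_fst)

lemma snd_traj_stable:
  "n \<le> m \<Longrightarrow> j \<le> int n \<Longrightarrow>
     snd (traj p d \<gamma> q0 c0 tb x m) j = snd (traj p d \<gamma> q0 c0 tb x n) j"
  by (induction m rule: dec_induct) (auto simp: traj_Suc_snd)

lemma Cproc_Suc:
  "Cproc p d \<gamma> q0 c0 tb x (Suc n) =
     policy_C \<gamma> (Qhat_of p d (fst (traj p d \<gamma> q0 c0 tb x n)) (snd (traj p d \<gamma> q0 c0 tb x n))
       (int (Suc n))) (tb (Suc n))"
  unfolding Cproc_def by (simp add: traj_Suc_snd)

lemma Cproc_01: "i \<ge> 1 \<Longrightarrow> Cproc p d \<gamma> q0 c0 tb x i \<in> {0, 1}"
  by (cases i) (simp_all add: Cproc_Suc policy_C_def)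

lemma sum_Sproc_bounds:
  "0 \<le> (\<Sum>i=1..k. Sproc p d \<gamma> q0 c0 tb x i) \<and> (\<Sum>i=1..k. Sproc p d \<gamma> q0 c0 tb x i) \<le> k"
proof -
  have S: "0 \<le> Sproc p d \<gamma> q0 c0 tb x i \<and> Sproc p d \<gamma> q0 c0 tb x i \<le> 1" if "i \<in> {1..k}" for i
    using Cproc_01[of i p d \<gamma> q0 c0 tb x] that by (auto simp: Sproc_def)
  then have "(\<Sum>i=1..k. Sproc p d \<gamma> q0 c0 tb x i) \<le> (\<Sum>i=1..k. 1)"
    by (intro sum_mono) blast
  then show ?thesis
    using S by (auto intro: sum_nonneg)
qed

lemma Qrproc_Suc_Suc:
  "Qrproc p d \<gamma> q0 c0 tb x (Suc (Suc n)) =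
     max 0 (Qrproc p d \<gamma> q0 c0 tb x (Suc n) + x (Suc n) - Cproc p d \<gamma> q0 c0 tb x (Suc n))"
  unfolding Qrproc_def Cproc_def by (simp add: traj_Suc_fst algebra_simps)

lemma Qhat_of_traj:
  assumes "d < Suc n"
  shows "Qhat_of p d (fst (traj p d \<gamma> q0 c0 tb x n)) (snd (traj p d \<gamma> q0 c0 tb x n)) (int (Suc n)) =
    Qrproc p d \<gamma> q0 c0 tb x (Suc n - d) +
      (\<Sum>j\<in>{Suc n - d..<Suc n}. expected_drift p (Cproc p d \<gamma> q0 c0 tb x j))"
proof -
  have window: "{int (Suc n) - int d..int (Suc n) - 1} = int ` {Suc n - d..<Suc n}"
    using assms by (auto simp: image_int_atLeastLessThan)
  have "fst (traj p d \<gamma> q0 c0 tb x n) (int (Suc n - d)) = Qrproc p d \<gamma> q0 c0 tb x (Suc n - d)"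
    unfolding Qrproc_def by (rule fst_traj_stable) (use assms in auto)
  moreover have "snd (traj p d \<gamma> q0 c0 tb x n) (int j) = Cproc p d \<gamma> q0 c0 tb x j"
    if "j \<in> {Suc n - d..<Suc n}" for j
    unfolding Cproc_def by (rule snd_traj_stable) (use that in auto)
  then have "(\<Sum>j\<in>int ` {Suc n - d..<Suc n}. (1 - snd (traj p d \<gamma> q0 c0 tb x n) j) * p
      - snd (traj p d \<gamma> q0 c0 tb x n) j * (1 - p))
    = (\<Sum>j\<in>{Suc n - d..<Suc n}. expected_drift p (Cproc p d \<gamma> q0 c0 tb x j))"
    by (simp add: sum.reindex expected_drift_def)
  ultimately show ?thesis
    using assms unfolding Qhat_of_def window by (simp add: of_nat_diff)
qed

lemma threshold_queue_traj:
  assumes "0 \<le> p" "p \<le> 1" "\<And>i. i \<ge> 1 \<Longrightarrow> x i \<in> {0, 1}" "q0 1 \<ge> 0"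
  shows "threshold_queue p \<gamma> d x (Cproc p d \<gamma> q0 c0 tb x) (Qrproc p d \<gamma> q0 c0 tb x)"
proof
  fix i :: nat
  assume "i \<ge> 1"
  then obtain n where i: "i = Suc n" using not0_implies_Suc by fastforce
  show "Cproc p d \<gamma> q0 c0 tb x i \<in> {0, 1}"
    using \<open>i \<ge> 1\<close> by (rule Cproc_01)
  show "Qrproc p d \<gamma> q0 c0 tb x (Suc i) =
      max 0 (Qrproc p d \<gamma> q0 c0 tb x i + x i - Cproc p d \<gamma> q0 c0 tb x i)"
    unfolding i by (rule Qrproc_Suc_Suc)
next
  fix i :: nat
  assume "d < i"
  then obtain n where i: "i = Suc n" and "d < Suc n" using not0_implies_Suc by fastforce
  have "Cproc p d \<gamma> q0 c0 tb x i = policy_C \<gamma> (Qrproc p d \<gamma> q0 c0 tb x (i - d) +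
      (\<Sum>j\<in>{i - d..<i}. expected_drift p (Cproc p d \<gamma> q0 c0 tb x j))) (tb i)"
    unfolding i Cproc_Suc Qhat_of_traj[OF \<open>d < Suc n\<close>] ..
  then show "Cproc p d \<gamma> q0 c0 tb x i = 1 \<Longrightarrow> \<gamma> \<le> Qrproc p d \<gamma> q0 c0 tb x (i - d) +
      (\<Sum>j\<in>{i - d..<i}. expected_drift p (Cproc p d \<gamma> q0 c0 tb x j))"
    and "Cproc p d \<gamma> q0 c0 tb x i = 0 \<Longrightarrow> Qrproc p d \<gamma> q0 c0 tb x (i - d) +
      (\<Sum>j\<in>{i - d..<i}. expected_drift p (Cproc p d \<gamma> q0 c0 tb x j)) \<le> \<gamma>"
    by (auto simp: policy_C_def split: if_splits)
qed (use assms in \<open>simp_all add: Qrproc_def\<close>)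

lemma measurable_traj:
  assumes "\<And>k. k \<ge> 1 \<Longrightarrow> X k \<in> borel_measurable M"
  shows "(\<lambda>\<omega>. fst (traj p d \<gamma> q0 c0 tb (\<lambda>n. X n \<omega>) n) j) \<in> borel_measurable M \<and>
         (\<lambda>\<omega>. snd (traj p d \<gamma> q0 c0 tb (\<lambda>n. X n \<omega>) n) j) \<in> borel_measurable M"
proof (induction n arbitrary: j)
  case (Suc n)
  have [measurable]: "X (Suc n) \<in> borel_measurable M" using assms by simp
  have [measurable]: "(\<lambda>\<omega>. fst (traj p d \<gamma> q0 c0 tb (\<lambda>n. X n \<omega>) n) i) \<in> borel_measurable M"
    "(\<lambda>\<omega>. snd (traj p d \<gamma> q0 c0 tb (\<lambda>n. X n \<omega>) n) i) \<in> borel_measurable M" for i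
    using Suc by blast+
  show ?case by (simp add: traj.simps(2) Let_def policy_C_def Qhat_of_def)
qed simp

lemma limsup_abs_eq_0_if_le_inverse:
  fixes a :: "nat \<Rightarrow> real"
  assumes "\<And>k. k \<ge> 1 \<Longrightarrow> \<bar>a k\<bar> \<le> K / real k"
  shows "limsup (\<lambda>k. ereal \<bar>a k\<bar>) = 0"
proof -
  have "a \<longlonglongrightarrow> 0"
  proof (rule Lim_null_comparison[OF _ lim_const_over_n[of K]])
    show "\<forall>\<^sub>F k in sequentially. norm (a k) \<le> K / real k"
      using eventually_ge_at_top[of 1] by eventually_elim (simp add: assms)
  qed
  then have "(\<lambda>k. ereal \<bar>a k\<bar>) \<longlonglongrightarrow> ereal 0"
    by (intro tendsto_ereal tendsto_rabs_zero)
  from lim_imp_Limsup[OF trivial_limit_sequentially this] show ?thesis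
    by (simp add: zero_ereal_def)
qed

lemma (in prob_space) average_integral_deviation:
  assumes "integrable M f" "integrable M g"
    and "\<And>\<omega>. \<omega> \<in> space M \<Longrightarrow> \<bar>f \<omega> - g \<omega>\<bar> \<le> K"
    and "(\<integral>\<omega>. g \<omega> \<partial>M) = real k * c" "k \<ge> 1"
  shows "\<bar>(\<integral>\<omega>. f \<omega> / real k \<partial>M) - c\<bar> \<le> K / real k"
proof -
  have "\<bar>(\<integral>\<omega>. f \<omega> \<partial>M) - real k * c\<bar> = \<bar>\<integral>\<omega>. f \<omega> - g \<omega> \<partial>M\<bar>"
    using assms(1,2,4) by simp
  also have "\<dots> \<le> (\<integral>\<omega>. \<bar>f \<omega> - g \<omega>\<bar> \<partial>M)"
    by (rule integral_abs_bound)
  also have "\<dots> \<le> K"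
    using assms by (intro integral_le_const) auto
  finally have "\<bar>(\<integral>\<omega>. f \<omega> \<partial>M) - real k * c\<bar> / real k \<le> K / real k"
    by (simp add: divide_right_mono)
  moreover have "(\<integral>\<omega>. f \<omega> / real k \<partial>M) - c = ((\<integral>\<omega>. f \<omega> \<partial>M) - real k * c) / real k"
    using \<open>k \<ge> 1\<close> by (simp add: field_simps)
  ultimately show ?thesis
    by (simp add: abs_divide)
qed

locale erasure_process = prob_space M for M :: "'a measure" +
  fixes X :: "nat \<Rightarrow> 'a \<Rightarrow> real" and p :: real
  assumes measurable_X: "i \<ge> 1 \<Longrightarrow> X i \<in> borel_measurable M"
    and X_01: "i \<ge> 1 \<Longrightarrow> \<omega> \<in> space M \<Longrightarrow> X i \<omega> \<in> {0, 1}"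
    and integral_X: "i \<ge> 1 \<Longrightarrow> (\<integral>\<omega>. X i \<omega> \<partial>M) = p"
begin

lemma X_bounds: "i \<ge> 1 \<Longrightarrow> \<omega> \<in> space M \<Longrightarrow> 0 \<le> X i \<omega> \<and> X i \<omega> \<le> 1"
  using X_01 by fastforce

lemma integrable_X: "i \<ge> 1 \<Longrightarrow> integrable M (X i)"
  using X_bounds measurable_X by (intro integrable_const_bound[where B = 1] AE_I2) auto

lemma p_bounds: "0 \<le> p \<and> p \<le> 1"
proof -
  have "0 \<le> (\<integral>\<omega>. X 1 \<omega> \<partial>M)" "(\<integral>\<omega>. X 1 \<omega> \<partial>M) \<le> 1"
    using integrable_X[of 1] X_bounds[of 1] by (intro integral_ge_const integral_le_const AE_I2; simp)+
  then show ?thesis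
    using integral_X[of 1] by simp
qed

lemma integral_sum_complements:
  "(\<integral>\<omega>. (\<Sum>i=1..k. 1 - X i \<omega>) \<partial>M) = real k * (1 - p)"
  using integrable_X integral_X
  by (simp add: Bochner_Integration.integral_sum Bochner_Integration.integral_diff prob_space)

lemma measurable_Cproc [measurable]:
  "(\<lambda>\<omega>. Cproc p d \<gamma> q0 c0 tb (\<lambda>n. X n \<omega>) i) \<in> borel_measurable M"
  using measurable_traj[of X, OF measurable_X] unfolding Cproc_def by blast

lemma measurable_Sproc [measurable]:
  "(\<lambda>\<omega>. Sproc p d \<gamma> q0 c0 tb (\<lambda>n. X n \<omega>) i) \<in> borel_measurable M"
  unfolding Sproc_def by measurable

lemma measurable_Qrproc [measurable]:
  "(\<lambda>\<omega>. Qrproc p d \<gamma> q0 c0 tb (\<lambda>n. X n \<omega>) i) \<in> borel_measurable M"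
  using measurable_traj[of X, OF measurable_X] unfolding Qrproc_def by blast

lemma threshold_queue_sample_path:
  "q0 1 \<ge> 0 \<Longrightarrow> \<omega> \<in> space M \<Longrightarrow>
    threshold_queue p \<gamma> d (\<lambda>n. X n \<omega>) (Cproc p d \<gamma> q0 c0 tb (\<lambda>n. X n \<omega>))
      (Qrproc p d \<gamma> q0 c0 tb (\<lambda>n. X n \<omega>))"
  using p_bounds X_01 by (intro threshold_queue_traj) auto

lemma integrable_sum_Sproc:
  "integrable M (\<lambda>\<omega>. \<Sum>i=1..k. Sproc p d \<gamma> q0 c0 tb (\<lambda>n. X n \<omega>) i)"
  using sum_Sproc_bounds by (intro integrable_const_bound[where B = k] AE_I2) auto

lemma expected_throughput_gap_le_1:
  "\<bar>(\<integral>\<omega>. (\<Sum>i=1..k. Sproc p d \<gamma> q0 c0 tb (\<lambda>n. X n \<omega>) i) / real k \<partial>M) - (1 - p)\<bar> \<le> 1"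
proof -
  let ?S = "\<lambda>\<omega>. (\<Sum>i=1..k. Sproc p d \<gamma> q0 c0 tb (\<lambda>n. X n \<omega>) i) / real k"
  have S: "0 \<le> ?S \<omega> \<and> ?S \<omega> \<le> 1" for \<omega>
    using sum_Sproc_bounds by (cases "k = 0") (auto simp: divide_le_eq)
  have "integrable M ?S"
    using integrable_sum_Sproc by simp
  then have "0 \<le> (\<integral>\<omega>. ?S \<omega> \<partial>M)" "(\<integral>\<omega>. ?S \<omega> \<partial>M) \<le> 1"
    using S by (intro integral_ge_const integral_le_const AE_I2; blast)+
  then show ?thesis
    using p_bounds by linarith
qed

lemma expected_throughput_gap_le:
  assumes "q0 1 \<ge> 0" "\<gamma> \<ge> real d + 1" "k \<ge> 1"
  shows "\<bar>(\<integral>\<omega>. (\<Sum>i=1..k. Sproc p d \<gamma> q0 c0 tb (\<lambda>n. X n \<omega>) i) / real k \<partial>M) - (1 - p)\<bar>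
    \<le> (max (q0 1 + d) (\<gamma> + d + 1) + q0 1 + d) / real k"
proof (rule average_integral_deviation[OF integrable_sum_Sproc _ _ integral_sum_complements \<open>k \<ge> 1\<close>])
  show "integrable M (\<lambda>\<omega>. \<Sum>i=1..k. 1 - X i \<omega>)"
    using integrable_X by auto
  show "\<bar>(\<Sum>i=1..k. Sproc p d \<gamma> q0 c0 tb (\<lambda>n. X n \<omega>) i) - (\<Sum>i=1..k. 1 - X i \<omega>)\<bar>
      \<le> max (q0 1 + d) (\<gamma> + d + 1) + q0 1 + d" if "\<omega> \<in> space M" for \<omega>
    using threshold_queue.throughput_deviation_bounded
        [OF threshold_queue_sample_path[of q0, OF assms(1) that] assms(2), where k = k]
    by (simp add: Sproc_def Qrproc_def)
qed

lemma integrable_average_queue: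
  assumes "q0 1 \<ge> 0"
  shows "integrable M (\<lambda>\<omega>. (\<Sum>i=1..k. Qrproc p d \<gamma> q0 c0 tb (\<lambda>n. X n \<omega>) i) / real k)"
proof (intro integrable_divide_zero Bochner_Integration.integrable_sum
    integrable_const_bound[where B = "max (q0 1 + d) (\<gamma> + d + 1)"] AE_I2)
  fix i \<omega> assume "\<omega> \<in> space M" "i \<in> {1..k}"
  then show "norm (Qrproc p d \<gamma> q0 c0 tb (\<lambda>n. X n \<omega>) i) \<le> max (q0 1 + d) (\<gamma> + d + 1)"
    using threshold_queue.Q_nonneg[OF threshold_queue_sample_path[of q0, OF assms], of \<omega> i]
      threshold_queue.Q_bounded[OF threshold_queue_sample_path[of q0, OF assms], of \<omega> i]
    by (simp add: Qrproc_def)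
qed simp

end

theorem lemma3:
  fixes M :: "'a measure" and X :: "nat \<Rightarrow> 'a \<Rightarrow> real"
    and p \<gamma> :: real and d :: nat
    and q0 c0 :: "int \<Rightarrow> real" and tb :: "nat \<Rightarrow> bool"
  assumes "prob_space M"
    and "\<And>k. k \<ge> 1 \<Longrightarrow> X k \<in> borel_measurable M"
    and "\<And>k \<omega>. k \<ge> 1 \<Longrightarrow> \<omega> \<in> space M \<Longrightarrow> X k \<omega> \<in> {0, 1}"
    and "\<And>k. k \<ge> 1 \<Longrightarrow> (\<integral>\<omega>. X k \<omega> \<partial>M) = p"
    and "0 \<le> p" and "p < 1" and "\<gamma> > 0"
    and "\<And>k. k \<le> 1 \<Longrightarrow> q0 k \<ge> 0"
    and "\<And>k. k \<le> 0 \<Longrightarrow> c0 k \<in> {0, 1}"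
    and "stationary_ergodic M X"
  shows "limsup (\<lambda>k. ereal \<bar>(\<integral>\<omega>. (\<Sum>i=1..k. Sproc p d \<gamma> q0 c0 tb (\<lambda>n. X n \<omega>) i) / real k \<partial>M)
                         - (1 - p)\<bar>) \<le> ereal ((1 + 2 * real d) / \<gamma>)
         \<and> (\<forall>k\<ge>1. integrable M (\<lambda>\<omega>. (\<Sum>i=1..k. Qrproc p d \<gamma> q0 c0 tb (\<lambda>n. X n \<omega>) i) / real k))"
proof -
  interpret erasure_process M X p
    using assms(1-4) by (simp add: erasure_process_def erasure_process_axioms_def)
  have q0_1: "q0 1 \<ge> 0"
    using assms(8) by simp
  let ?gap = "\<lambda>k. \<bar>(\<integral>\<omega>. (\<Sum>i=1..k. Sproc p d \<gamma> q0 c0 tb (\<lambda>n. X n \<omega>) i) / real k \<partial>M) - (1 - p)\<bar>"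
  have "limsup (\<lambda>k. ereal (?gap k)) \<le> ereal ((1 + 2 * real d) / \<gamma>)"
  proof (cases "\<gamma> \<ge> real d + 1")
    case True
    then have "limsup (\<lambda>k. ereal (?gap k)) = 0"
      using expected_throughput_gap_le[of q0, OF q0_1] by (intro limsup_abs_eq_0_if_le_inverse) blast
    then show ?thesis
      using assms(7) by simp
  next
    case False
    then have "1 \<le> (1 + 2 * real d) / \<gamma>"
      using assms(7) by (simp add: le_divide_eq)
    then have "?gap k \<le> (1 + 2 * real d) / \<gamma>" for k
      using expected_throughput_gap_le_1[of d \<gamma> q0 c0 tb k] by linarith
    then show ?thesis
      by (intro Limsup_bounded always_eventually) simp
  qed
  then show ?thesis
    using integrable_average_queue[of q0, OF q0_1] by blast
qed

end
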